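(* Let $H^0(\mathcal A_\theta^{alg},{}_{\omega}\mathcal A_\theta^{alg\ast})$ be the space of formal series $\varphi=\sum\varphi_{n,m}U_1^nU_2^m$ with $(\omega\cdot a)\varphi=\varphi a$ for all $a\in\mathcal A_\theta^{alg}$, and let $\mathbb Z_3=\langle\omega\rangle$ act on it by applying $\omega$ termwise. Then the subspace of $\mathbb Z_3$-invariant elements satisfies $H^0(\mathcal A_\theta^{alg},{}_{\omega}\mathcal A_\theta^{alg\ast})^{\mathbb Z_3}\cong\mathbb C^3$.
   Context: Let $\theta\in\mathbb R\setminus\mathbb Q$, $\lambda=e^{2\pi i\theta}$, $\lambda^s:=e^{2\pi i\theta s}$. $\mathcal A_\theta^{alg}$ is the complex algebra of finite sums $\sum a_{n,m}U_1^nU_2^m$ with $U_1,U_2$ invertible and $U_2U_1=\lambda U_1U_2$; formal series $\sum_{(n,m)\in\mathbb Z^2}\varphi_{n,m}U_1^nU_2^m$ with arbitrary coefficients form an $\mathcal A_\theta^{alg}$-bimodule via multiplication. $\omega$ is the automorphism with $\omega\cdot U_1=U_2^{-1}$, $\omega\cdot U_2=\lambda^{-1/2}U_1U_2^{-1}$; it has order $3$. Termwise action: $\omega\cdot\sum\varphi_{n,m}U_1^nU_2^m=\sum\varphi_{n,m}\,\omega\cdot(U_1^nU_2^m)$, which is again a formal series. *)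

theory Defs
  imports Complex_Main
begin

text \<open>Elements of the noncommutative torus (algebraic) and formal series are both
  represented by their coefficient functions on the basis U1^n U2^m, indexed by (n,m).\<close>

type_synonym fseries = "int \<times> int \<Rightarrow> complex"

definition lam :: "real \<Rightarrow> real \<Rightarrow> complex" where
  "lam \<theta> s = exp (2 * complex_of_real pi * \<i> * complex_of_real (\<theta> * s))"

definition supp :: "fseries \<Rightarrow> (int \<times> int) set" where
  "supp a = {k. a k \<noteq> 0}"

definition is_alg :: "fseries \<Rightarrow> bool" where
  "is_alg a \<longleftrightarrow> finite (supp a)"

text \<open>Monomial product: U1^n U2^m * U1^p U2^q = lambda^(m p) U1^(n+p) U2^(m+q),
  which follows from U2 U1 = lambda U1 U2.\<close>

definition lmul :: "real \<Rightarrow> fseries \<Rightarrow> fseries \<Rightarrow> fseries" where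
  "lmul \<theta> a \<phi> = (\<lambda>(n,m). \<Sum>(p,q)\<in>supp a.
      a (p,q) * \<phi> (n - p, m - q) * lam \<theta> (of_int (q * (n - p))))"

definition rmul :: "real \<Rightarrow> fseries \<Rightarrow> fseries \<Rightarrow> fseries" where
  "rmul \<theta> \<phi> a = (\<lambda>(n,m). \<Sum>(p,q)\<in>supp a.
      \<phi> (n - p, m - q) * a (p,q) * lam \<theta> (of_int ((m - q) * p)))"

definition mon :: "int \<Rightarrow> int \<Rightarrow> fseries" where
  "mon n m = (\<lambda>k. if k = (n,m) then 1 else 0)"

definition unitA :: fseries where "unitA = mon 0 0"

definition ainv :: "real \<Rightarrow> fseries \<Rightarrow> fseries" where
  "ainv \<theta> x = (THE y. is_alg y \<and> lmul \<theta> x y = unitA \<and> lmul \<theta> y x = unitA)"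

definition zpow :: "real \<Rightarrow> fseries \<Rightarrow> int \<Rightarrow> fseries" where
  "zpow \<theta> x n = (if 0 \<le> n then (lmul \<theta> x ^^ nat n) unitA
                  else (lmul \<theta> (ainv \<theta> x) ^^ nat (- n)) unitA)"

text \<open>omega(U1) = U2^-1, omega(U2) = lambda^(-1/2) U1 U2^-1.\<close>

definition omega1 :: fseries where "omega1 = mon 0 (-1)"

definition omega2 :: "real \<Rightarrow> fseries" where
  "omega2 \<theta> = (\<lambda>k. lam \<theta> (-1/2) * mon 1 (-1) k)"

definition omega_mon :: "real \<Rightarrow> int \<times> int \<Rightarrow> fseries" where
  "omega_mon \<theta> = (\<lambda>(n,m). lmul \<theta> (zpow \<theta> omega1 n) (zpow \<theta> (omega2 \<theta>) m))"

definition omega_alg :: "real \<Rightarrow> fseries \<Rightarrow> fseries" where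
  "omega_alg \<theta> a = (\<lambda>k. \<Sum>j\<in>supp a. a j * omega_mon \<theta> j k)"

text \<open>Termwise action on formal series: the coefficient at k collects the
  (finitely many) terms phi_j omega(U^j) contributing to k.\<close>

definition omega_fs :: "real \<Rightarrow> fseries \<Rightarrow> fseries" where
  "omega_fs \<theta> \<phi> = (\<lambda>k. \<Sum>j\<in>{j. omega_mon \<theta> j k \<noteq> 0}. \<phi> j * omega_mon \<theta> j k)"

definition H0 :: "real \<Rightarrow> fseries set" where
  "H0 \<theta> = {\<phi>. \<forall>a. is_alg a \<longrightarrow> lmul \<theta> (omega_alg \<theta> a) \<phi> = rmul \<theta> \<phi> a}"

definition H0_inv :: "real \<Rightarrow> fseries set" where
  "H0_inv \<theta> = {\<phi> \<in> H0 \<theta>. omega_fs \<theta> \<phi> = \<phi>}"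

end

theory Submission
  imports Defs
begin

text \<open>The automorphism sends the monomial with index (p,q) to a nonzero multiple of the monomial
  with index (q,-p-q), an index permutation of order 3. Testing the equation
  (omega a) phi = phi a on monomials a yields relations between coefficients of phi which connect
  every index (n,m) to exactly one of (0,0), (1,0), (2,0), the residue of n - m modulo 3 being
  preserved. Hence a solution is determined by three values, and on each residue class the series
  lambda^(Q(n,m)) with Q(x,y) = (x^2 + 4xy + y^2)/6 is a solution. These three solutions are
  themselves omega-invariant, so the invariant subspace is all of the three-dimensional solution
  space.\<close>

lemma lam_add: "lam t a * lam t b = lam t (a + b)"
  unfolding lam_def by (simp add: exp_add[symmetric] algebra_simps)

lemma lam_nonzero: "lam t a \<noteq> 0"
  unfolding lam_def by simp

lemma lam_zero [simp]: "lam t 0 = 1"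
  unfolding lam_def by simp

lemma lam_power: "lam t a ^ k = lam t (real k * a)"
  by (induction k) (simp_all add: lam_add[symmetric] algebra_simps)

lemma lam_power_int: "lam t a powi n = lam t (of_int n * a)"
proof -
  have "inverse (lam t b) = lam t (- b)" for b
    using lam_add[of t b "- b"] lam_nonzero[of t] by (simp add: inverse_unique)
  then show ?thesis
    by (simp add: power_int_def lam_power power_inverse)
qed

definition cmon :: "complex \<Rightarrow> int \<Rightarrow> int \<Rightarrow> fseries" where
  "cmon c p q = (\<lambda>k. c * mon p q k)"

lemma cmon_apply: "cmon c p q k = (if k = (p,q) then c else 0)"
  by (simp add: cmon_def mon_def)

lemma supp_cmon: "c \<noteq> 0 \<Longrightarrow> supp (cmon c p q) = {(p,q)}"
  by (auto simp: supp_def cmon_apply)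

lemma is_alg_cmon: "is_alg (cmon c p q)"
  by (cases "c = 0") (simp_all add: is_alg_def supp_cmon supp_def cmon_apply)

lemma unitA_eq_cmon: "unitA = cmon 1 0 0"
  by (simp add: unitA_def cmon_def)

lemma lmul_cmon:
  "c \<noteq> 0 \<Longrightarrow> lmul t (cmon c p q) \<phi> (n,m) = c * \<phi> (n-p, m-q) * lam t (of_int (q * (n-p)))"
  by (simp add: lmul_def supp_cmon cmon_apply)

lemma lmul_cmon_cmon:
  "c \<noteq> 0 \<Longrightarrow> lmul t (cmon c p q) (cmon d r s) = cmon (c * d * lam t (of_int (q * r))) (p+r) (q+s)"
  by (rule ext, clarify) (auto simp: lmul_cmon cmon_apply)

lemma ainv_cmon:
  assumes c: "c \<noteq> 0"
  shows "ainv t (cmon c p q) = cmon (inverse c * lam t (of_int (p * q))) (-p) (-q)"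
  unfolding ainv_def
proof (rule the_equality)
  show "is_alg (cmon (inverse c * lam t (of_int (p * q))) (-p) (-q)) \<and>
        lmul t (cmon c p q) (cmon (inverse c * lam t (of_int (p * q))) (-p) (-q)) = unitA \<and>
        lmul t (cmon (inverse c * lam t (of_int (p * q))) (-p) (-q)) (cmon c p q) = unitA"
    using c lam_nonzero[of t]
    by (simp add: is_alg_cmon lmul_cmon_cmon unitA_eq_cmon lam_add algebra_simps)
next
  fix y assume "is_alg y \<and> lmul t (cmon c p q) y = unitA \<and> lmul t y (cmon c p q) = unitA"
  then have right_inverse: "lmul t (cmon c p q) y (a+p, b+q) = unitA (a+p, b+q)" for a b
    by simp
  show "y = cmon (inverse c * lam t (of_int (p * q))) (-p) (-q)"
  proof (rule ext, clarify)
    fix a b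
    have eq: "c * y (a,b) * lam t (of_int (q * a)) = (if (a,b) = (-p,-q) then 1 else 0)"
      using right_inverse[of a b] c by (auto simp: lmul_cmon unitA_eq_cmon cmon_apply)
    show "y (a,b) = cmon (inverse c * lam t (of_int (p * q))) (-p) (-q) (a,b)"
    proof (cases "(a,b) = (-p,-q)")
      case True
      then have "lam t (of_int (q * a)) * lam t (of_int (p * q)) = 1"
        by (simp add: lam_add)
      then have "c * y (a,b) = lam t (of_int (p * q))"
        using eq True by (metis mult.assoc mult_1 mult_1_right)
      then show ?thesis
        using True c by (simp add: cmon_apply field_simps)
    qed (use eq c lam_nonzero[of t] in \<open>auto simp: cmon_apply\<close>)
  qed
qed

lemma funpow_lmul_cmon:
  assumes "c \<noteq> 0"
  shows "(lmul t (cmon c p q) ^^ k) unitA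
           = cmon (c ^ k * lam t (of_int (p * q) * (real k * (real k - 1) / 2))) (int k * p) (int k * q)"
proof (induction k)
  case 0
  show ?case by (simp add: unitA_eq_cmon)
next
  case (Suc k)
  have "lam t (of_int (p * q) * (real k * (real k - 1) / 2)) * lam t (of_int (q * (int k * p)))
          = lam t (of_int (p * q) * (real (Suc k) * (real (Suc k) - 1) / 2))"
    unfolding lam_add by (rule arg_cong[where f = "lam t"]) (simp add: field_simps)
  then show ?case
    using assms by (simp add: Suc lmul_cmon_cmon algebra_simps)
qed

lemma zpow_cmon:
  assumes c: "c \<noteq> 0"
  shows "zpow t (cmon c p q) n
           = cmon (c powi n * lam t (of_int (p * q) * (of_int n * (of_int n - 1) / 2))) (n * p) (n * q)"
proof (cases "0 \<le> n")
  case True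
  then show ?thesis
    by (simp add: zpow_def funpow_lmul_cmon[OF c] power_int_def)
next
  case False
  define k where "k = nat (-n)"
  have n: "n = - int k" and "k > 0"
    using False by (simp_all add: k_def)
  have "lam t (real k * of_int (p * q)) * lam t (of_int (p * q) * (real k * (real k - 1) / 2))
          = lam t (of_int (p * q) * (of_int n * (of_int n - 1) / 2))"
    by (simp add: lam_add n field_simps)
  then show ?thesis
    using False c lam_nonzero[of t]
    by (simp add: zpow_def ainv_cmon funpow_lmul_cmon power_mult_distrib lam_power power_int_def
        k_def[symmetric] n mult.assoc)
qed

definition omega_coeff :: "real \<Rightarrow> int \<times> int \<Rightarrow> complex" where
  "omega_coeff t = (\<lambda>(p,q). lam t (- (of_int p * of_int q) - real_of_int q ^ 2 / 2))"

definition omega_index :: "int \<times> int \<Rightarrow> int \<times> int" where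
  "omega_index = (\<lambda>(p,q). (q, -p-q))"

definition omega_index_inv :: "int \<times> int \<Rightarrow> int \<times> int" where
  "omega_index_inv = (\<lambda>(x,y). (-x-y, x))"

lemma omega_coeff_nonzero: "omega_coeff t j \<noteq> 0"
  by (cases j) (simp add: omega_coeff_def lam_nonzero)

lemma omega_index_inv_inverse [simp]:
  "omega_index (omega_index_inv k) = k" "omega_index_inv (omega_index k) = k"
  by (cases k, simp add: omega_index_def omega_index_inv_def)+

lemma omega_mon_eq_cmon:
  "omega_mon t j = cmon (omega_coeff t j) (fst (omega_index j)) (snd (omega_index j))"
proof (cases j)
  case (Pair p q)
  have omega1: "omega1 = cmon 1 0 (-1)" and omega2: "omega2 t = cmon (lam t (-1/2)) 1 (-1)"
    by (simp_all add: omega1_def omega2_def cmon_def)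
  have "lam t (real_of_int q * (-1/2)) * lam t (- (of_int q * (of_int q - 1) / 2))
          * lam t (- of_int (p * q)) = omega_coeff t (p,q)"
    by (simp add: omega_coeff_def lam_add power2_eq_square field_simps)
  then show ?thesis
    using Pair lam_nonzero[of t]
    by (simp add: omega_mon_def omega1 omega2 zpow_cmon lmul_cmon_cmon omega_index_def
        lam_power_int mult.assoc)
qed

lemma omega_mon_apply:
  "omega_mon t j k = (if j = omega_index_inv k then omega_coeff t j else 0)"
proof -
  have "k = omega_index j \<longleftrightarrow> j = omega_index_inv k"
    by (metis omega_index_inv_inverse)
  then show ?thesis
    by (cases "omega_index j") (auto simp: omega_mon_eq_cmon cmon_apply)
qed

lemma omega_alg_apply:
  assumes "is_alg a"
  shows "omega_alg t a k = a (omega_index_inv k) * omega_coeff t (omega_index_inv k)"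
proof -
  have "omega_alg t a k = (\<Sum>j\<in>supp a. if j = omega_index_inv k then a j * omega_coeff t j else 0)"
    unfolding omega_alg_def by (rule sum.cong) (auto simp: omega_mon_apply)
  also have "\<dots> = (if omega_index_inv k \<in> supp a then a (omega_index_inv k) * omega_coeff t (omega_index_inv k) else 0)"
    using assms by (simp add: is_alg_def sum.delta')
  finally show ?thesis
    by (auto simp: supp_def)
qed

lemma omega_fs_apply: "omega_fs t \<phi> k = \<phi> (omega_index_inv k) * omega_coeff t (omega_index_inv k)"
proof -
  have "{j. omega_mon t j k \<noteq> 0} = {omega_index_inv k}"
    by (auto simp: omega_mon_apply omega_coeff_nonzero)
  then show ?thesis
    by (simp add: omega_fs_def omega_mon_apply)
qed

text \<open>The coefficient at (n,m) of the equation (omega a) phi = phi a for the monomial a with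
  index (p,q).\<close>

definition commutes_monomials :: "real \<Rightarrow> fseries \<Rightarrow> bool" where
  "commutes_monomials t \<phi> \<longleftrightarrow> (\<forall>p q n m.
     omega_coeff t (p,q) * \<phi> (n-q, m+p+q) * lam t (of_int ((-p-q) * (n-q)))
       = \<phi> (n-p, m-q) * lam t (of_int ((m-q) * p)))"

lemma commutes_monomials_lincomb:
  assumes "commutes_monomials t \<phi>" "commutes_monomials t \<psi>"
  shows "commutes_monomials t (\<lambda>k. a * \<phi> k + b * \<psi> k)"
  unfolding commutes_monomials_def
proof (intro allI)
  fix p q n m
  let ?c = "omega_coeff t (p,q)" and ?l = "lam t (of_int ((-p-q) * (n-q)))"
    and ?r = "lam t (of_int ((m-q) * p))"
  have "?c * (a * \<phi> (n-q, m+p+q) + b * \<psi> (n-q, m+p+q)) * ?l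
          = a * (?c * \<phi> (n-q, m+p+q) * ?l) + b * (?c * \<psi> (n-q, m+p+q) * ?l)"
    by (simp add: algebra_simps)
  also have "\<dots> = (a * \<phi> (n-p, m-q) + b * \<psi> (n-p, m-q)) * ?r"
    using assms unfolding commutes_monomials_def by (simp only: distrib_right mult.assoc)
  finally show "?c * (a * \<phi> (n-q, m+p+q) + b * \<psi> (n-q, m+p+q)) * ?l
          = (a * \<phi> (n-p, m-q) + b * \<psi> (n-p, m-q)) * ?r" .
qed

lemma lmul_omega_alg:
  assumes "is_alg a"
  shows "lmul t (omega_alg t a) \<phi> (n,m) = (\<Sum>(p,q)\<in>supp a.
           a (p,q) * (omega_coeff t (p,q) * \<phi> (n-q, m+p+q) * lam t (of_int ((-p-q) * (n-q)))))"
proof -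
  have "k \<in> supp (omega_alg t a) \<longleftrightarrow> omega_index_inv k \<in> supp a" for k
    using assms by (simp add: supp_def omega_alg_apply omega_coeff_nonzero)
  then have supp_omega: "supp (omega_alg t a) = omega_index ` supp a"
    by (metis (no_types, lifting) image_eqI omega_index_inv_inverse subsetI subset_antisym imageE)
  have "inj_on omega_index (supp a)"
    by (metis inj_on_inverseI omega_index_inv_inverse(2))
  then show ?thesis
    unfolding lmul_def supp_omega prod.case sum.reindex[OF \<open>inj_on omega_index (supp a)\<close>]
    by (intro sum.cong) (auto simp: omega_index_def omega_index_inv_def omega_alg_apply[OF assms] algebra_simps)
qed

lemma H0_iff_commutes_monomials: "\<phi> \<in> H0 t \<longleftrightarrow> commutes_monomials t \<phi>"
proof
  assume "\<phi> \<in> H0 t"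
  then have "lmul t (omega_alg t (cmon 1 p q)) \<phi> (n,m) = rmul t \<phi> (cmon 1 p q) (n,m)" for p q n m
    by (simp add: H0_def is_alg_cmon)
  then show "commutes_monomials t \<phi>"
    by (simp add: commutes_monomials_def lmul_omega_alg is_alg_cmon rmul_def supp_cmon cmon_apply)
next
  assume "commutes_monomials t \<phi>"
  then show "\<phi> \<in> H0 t"
    unfolding H0_def
  proof (intro CollectI allI impI ext, clarify)
    fix a :: fseries and n m :: int
    assume "is_alg a"
    show "lmul t (omega_alg t a) \<phi> (n,m) = rmul t \<phi> a (n,m)"
      unfolding lmul_omega_alg[OF \<open>is_alg a\<close>] rmul_def prod.case
      by (rule sum.cong) (use \<open>commutes_monomials t \<phi>\<close> in \<open>auto simp: commutes_monomials_def\<close>)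
  qed
qed

definition quad_form :: "int \<Rightarrow> int \<Rightarrow> real" where
  "quad_form x y = (real_of_int x ^ 2 + 4 * real_of_int x * real_of_int y + real_of_int y ^ 2) / 6"

definition H0_basis :: "real \<Rightarrow> int \<Rightarrow> fseries" where
  "H0_basis t i = (\<lambda>(x,y). if (x - y) mod 3 = i then lam t (quad_form x y) else 0)"

lemma commutes_monomials_H0_basis: "commutes_monomials t (H0_basis t i)"
  unfolding commutes_monomials_def
proof (intro allI)
  fix p q n m :: int
  have "(n - q - (m + p + q)) mod 3 = (n - p - (m - q)) mod 3"
    by presburger
  moreover have "(- (real_of_int p * real_of_int q) - real_of_int q ^ 2 / 2) + quad_form (n-q) (m+p+q)
      + real_of_int ((-p-q) * (n-q)) = quad_form (n-p) (m-q) + real_of_int ((m-q) * p)"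
    unfolding quad_form_def by (simp add: power2_eq_square field_simps)
  ultimately show "omega_coeff t (p,q) * H0_basis t i (n-q, m+p+q) * lam t (of_int ((-p-q) * (n-q)))
      = H0_basis t i (n-p, m-q) * lam t (of_int ((m-q) * p))"
    by (simp add: H0_basis_def omega_coeff_def lam_add)
qed

lemma omega_fs_H0_basis: "omega_fs t (H0_basis t i) = H0_basis t i"
proof (rule ext, clarify)
  fix a b :: int
  have "(-a-b-a) mod 3 = (a - b) mod 3"
    by presburger
  moreover have "quad_form (-a-b) a + (- (real_of_int (-a-b) * real_of_int a) - real_of_int a ^ 2 / 2)
      = quad_form a b"
    unfolding quad_form_def by (simp add: power2_eq_square field_simps)
  ultimately show "omega_fs t (H0_basis t i) (a,b) = H0_basis t i (a,b)"
    by (simp add: omega_fs_apply omega_index_inv_def H0_basis_def omega_coeff_def lam_add)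
qed

lemma H0_basis_at_axis:
  "i \<in> {0,1,2} \<Longrightarrow> j \<in> {0,1,2} \<Longrightarrow> H0_basis t j (i,0) = (if i = j then lam t (quad_form i 0) else 0)"
  by (auto simp: H0_basis_def)

lemma commutes_monomials_H0_comb:
  "commutes_monomials t (\<lambda>k. c1 * H0_basis t 0 k + c2 * H0_basis t 1 k + c3 * H0_basis t 2 k)"
proof -
  have "commutes_monomials t (\<lambda>k. c1 * H0_basis t 0 k + c2 * H0_basis t 1 k)"
    by (intro commutes_monomials_lincomb commutes_monomials_H0_basis)
  from commutes_monomials_lincomb[OF this commutes_monomials_H0_basis, of 1 c3]
  show ?thesis by simp
qed

text \<open>The relation for the monomial with index (p,q), read at (n,m) = (i+p,q), links the
  coefficients at (i,0) and (i+p-q, p+2q); every index is reached this way from i = 0, 1 or 2.\<close>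

lemma commutes_monomials_eq_zero:
  assumes "commutes_monomials t \<psi>" and "\<psi> (0,0) = 0" "\<psi> (1,0) = 0" "\<psi> (2,0) = 0"
  shows "\<psi> = (\<lambda>_. 0)"
proof (rule ext, clarify)
  fix x y :: int
  define i where "i = (x - y) mod 3"
  define q where "q = (y - x + i) div 3"
  define p where "p = y - 2 * q"
  have "i = 0 \<or> i = 1 \<or> i = 2"
    unfolding i_def by presburger
  then have "\<psi> (i,0) = 0"
    using assms(2-4) by auto
  moreover have "3 * q = y - x + i"
    unfolding q_def i_def by presburger
  then have "i + p - q = x" and "q + p + q = y"
    by (simp_all add: p_def)
  moreover have "omega_coeff t (p,q) * \<psi> (i+p-q, q+p+q) * lam t (of_int ((-p-q) * (i+p-q)))
       = \<psi> (i+p-p, q-q) * lam t (of_int ((q-q) * p))"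
    using assms(1) unfolding commutes_monomials_def by (metis add_diff_cancel_right')
  ultimately show "\<psi> (x,y) = 0"
    using omega_coeff_nonzero lam_nonzero by simp
qed

definition H0_coord :: "real \<Rightarrow> fseries \<Rightarrow> int \<Rightarrow> complex" where
  "H0_coord t \<phi> i = \<phi> (i,0) * lam t (- quad_form i 0)"

lemma H0_expansion:
  assumes "\<phi> \<in> H0 t"
  shows "\<phi> = (\<lambda>k. H0_coord t \<phi> 0 * H0_basis t 0 k + H0_coord t \<phi> 1 * H0_basis t 1 k
                    + H0_coord t \<phi> 2 * H0_basis t 2 k)" (is "\<phi> = ?g")
proof -
  have "commutes_monomials t (\<lambda>k. 1 * \<phi> k + (-1) * ?g k)"
    using assms by (intro commutes_monomials_lincomb commutes_monomials_H0_comb)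
      (simp add: H0_iff_commutes_monomials)
  moreover have "H0_coord t \<phi> i * lam t (quad_form i 0) = \<phi> (i,0)" for i
    by (simp add: H0_coord_def lam_add)
  ultimately have zero: "(\<lambda>k. 1 * \<phi> k + (-1) * ?g k) = (\<lambda>_. 0)"
    by (intro commutes_monomials_eq_zero) (simp_all add: H0_basis_def)
  have "\<phi> k - ?g k = 0" for k
    using fun_cong[OF zero, of k] by (simp add: algebra_simps)
  then show ?thesis
    by auto
qed

lemma H0_inv_eq_H0: "H0_inv t = H0 t"
proof -
  have "omega_fs t \<phi> = \<phi>" if "\<phi> \<in> H0 t" for \<phi>
  proof (rule ext)
    fix k
    have basis: "H0_basis t i (omega_index_inv k) * omega_coeff t (omega_index_inv k) = H0_basis t i k" for i
      using fun_cong[OF omega_fs_H0_basis, of t i k] by (simp add: omega_fs_apply)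
    show "omega_fs t \<phi> k = \<phi> k"
      unfolding omega_fs_apply
      by (subst (1 2) H0_expansion[OF that]) (simp add: basis[symmetric] algebra_simps)
  qed
  then show ?thesis
    by (auto simp: H0_inv_def)
qed

lemma bij_betw_H0_basis:
  "bij_betw (\<lambda>(c1, c2, c3). (\<lambda>k. c1 * H0_basis t 0 k + c2 * H0_basis t 1 k + c3 * H0_basis t 2 k))
     UNIV (H0 t)" (is "bij_betw ?f UNIV (H0 t)")
proof (rule bij_betw_imageI)
  show "inj ?f"
  proof (rule injI)
    fix u v :: "complex \<times> complex \<times> complex"
    assume "?f u = ?f v"
    then have "?f u (i,0) = ?f v (i,0)" for i
      by simp
    from this[of 0] this[of 1] this[of 2] show "u = v"
      using lam_nonzero[of t] by (cases u, cases v) (simp add: H0_basis_at_axis)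
  qed
  show "range ?f = H0 t"
  proof
    show "range ?f \<subseteq> H0 t"
      by (auto simp: H0_iff_commutes_monomials commutes_monomials_H0_comb)
    show "H0 t \<subseteq> range ?f"
    proof
      fix \<phi> assume "\<phi> \<in> H0 t"
      then have "\<phi> = ?f (H0_coord t \<phi> 0, H0_coord t \<phi> 1, H0_coord t \<phi> 2)"
        using H0_expansion by simp
      then show "\<phi> \<in> range ?f"
        by blast
    qed
  qed
qed

theorem mainTheorem4:
  fixes \<theta> :: real
  assumes "\<theta> \<notin> \<rat>"
  shows "\<exists>e1 e2 e3 :: fseries.
           bij_betw (\<lambda>(c1, c2, c3). (\<lambda>k. c1 * e1 k + c2 * e2 k + c3 * e3 k))
                    (UNIV :: (complex \<times> complex \<times> complex) set) (H0_inv \<theta>)"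
  using bij_betw_H0_basis[of \<theta>] unfolding H0_inv_eq_H0 by blast

end
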